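(* For all $\epsilon>0$ and $k\in\mathbb{N}$, let $d=d(\epsilon)=1280\epsilon^{-2}$ and $N=N(\epsilon,k)=1800k\epsilon^{-4}$. Let $D$ be a properly totally coloured digraph on at least $N$ vertices with rainbow vertex set. Then there is a subset $A\subseteq V(D)$ which is $(k,d)$-connected in $D$ (in the coloured sense) and satisfies $|A|\geq\delta^+(D)-\epsilon|D|$.
   Context: Digraphs are finite, without loops and without multiple edges (an edge may appear in both directions). A path is a sequence of distinct vertices $x_1,\dots,x_t$ with each $x_ix_{i+1}$ a directed edge; its length is its number of edges. A total colouring assigns a colour to every vertex and edge; it is proper if outgoing edges at any vertex have distinct colours, ingoing edges at any vertex have distinct colours, adjacent vertices have distinct colours, and every edge has a colour different from both its endpoints. $D$ has rainbow vertex set if all vertices have distinct colours. A path is rainbow if all its vertices and edges have pairwise distinct colours. A set $A\subseteq V(D)$ is $(k,d)$-connected in the totally coloured digraph $D$ if for every set $S$ of at most $k-1$ colours and all $x,y\in A$ there is a rainbow path from $x$ to $y$ of length at most $d$ none of whose edges, and none of whose vertices other than $x,y$, has a colour in $S$. $\delta^+(D)$ is the minimum out-degree, $|D|$ the number of vertices. *)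

theory Defs
  imports Main Complex_Main
begin

text \<open>Since E is a set of ordered pairs there are no multiple edges,
  while both (x,y) and (y,x) may be present.\<close>

definition digraph :: "'a set \<Rightarrow> ('a \<times> 'a) set \<Rightarrow> bool" where
  "digraph V E \<longleftrightarrow> finite V \<and> E \<subseteq> V \<times> V \<and> (\<forall>x. (x, x) \<notin> E)"

definition proper_total_colouring ::
  "'a set \<Rightarrow> ('a \<times> 'a) set \<Rightarrow> ('a \<Rightarrow> 'c) \<Rightarrow> ('a \<times> 'a \<Rightarrow> 'c) \<Rightarrow> bool" where
  "proper_total_colouring V E cv ce \<longleftrightarrow>
     (\<forall>x y z. (x, y) \<in> E \<and> (x, z) \<in> E \<and> y \<noteq> z \<longrightarrow> ce (x, y) \<noteq> ce (x, z)) \<and>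
     (\<forall>x y z. (y, x) \<in> E \<and> (z, x) \<in> E \<and> y \<noteq> z \<longrightarrow> ce (y, x) \<noteq> ce (z, x)) \<and>
     (\<forall>x y. (x, y) \<in> E \<longrightarrow> cv x \<noteq> cv y) \<and>
     (\<forall>x y. (x, y) \<in> E \<longrightarrow> ce (x, y) \<noteq> cv x \<and> ce (x, y) \<noteq> cv y)"

definition rainbow_vertex_set :: "'a set \<Rightarrow> ('a \<Rightarrow> 'c) \<Rightarrow> bool" where
  "rainbow_vertex_set V cv \<longleftrightarrow> inj_on cv V"

definition path_edges :: "'a list \<Rightarrow> ('a \<times> 'a) list" where
  "path_edges xs = zip xs (tl xs)"

definition is_path :: "'a set \<Rightarrow> ('a \<times> 'a) set \<Rightarrow> 'a list \<Rightarrow> bool" where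
  "is_path V E xs \<longleftrightarrow> xs \<noteq> [] \<and> distinct xs \<and> set xs \<subseteq> V \<and> set (path_edges xs) \<subseteq> E"

definition path_length :: "'a list \<Rightarrow> nat" where
  "path_length xs = length xs - 1"

definition rainbow_path :: "('a \<Rightarrow> 'c) \<Rightarrow> ('a \<times> 'a \<Rightarrow> 'c) \<Rightarrow> 'a list \<Rightarrow> bool" where
  "rainbow_path cv ce xs \<longleftrightarrow> distinct (map cv xs @ map ce (path_edges xs))"

definition kd_connected ::
  "'a set \<Rightarrow> ('a \<times> 'a) set \<Rightarrow> ('a \<Rightarrow> 'c) \<Rightarrow> ('a \<times> 'a \<Rightarrow> 'c) \<Rightarrow> nat \<Rightarrow> real \<Rightarrow> 'a set \<Rightarrow> bool" where
  "kd_connected V E cv ce k d A \<longleftrightarrow>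
     (\<forall>S x y. finite S \<and> card S < k \<and> x \<in> A \<and> y \<in> A \<longrightarrow>
        (\<exists>xs. is_path V E xs \<and> hd xs = x \<and> last xs = y \<and> rainbow_path cv ce xs \<and>
              real (path_length xs) \<le> d \<and>
              (\<forall>e \<in> set (path_edges xs). ce e \<notin> S) \<and>
              (\<forall>v \<in> set xs. v \<noteq> x \<and> v \<noteq> y \<longrightarrow> cv v \<notin> S)))"

definition min_outdeg :: "'a set \<Rightarrow> ('a \<times> 'a) set \<Rightarrow> nat" where
  "min_outdeg V E = (if V = {} then 0 else Min ((\<lambda>x. card {y. (x, y) \<in> E}) ` V))"

end

theory Submission
  imports Defs
begin

text \<open>Start from U = V and shrink U while keeping the minimum out-degree inside U close
  to the minimum out-degree \<delta> of D. For a start vertex w and a set F of at most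
  k + 2 forbidden colours, grow the ball of vertices reachable from w inside U by short
  rainbow paths avoiding F; as the ball cannot keep gaining a fixed fraction \<eta> of
  the vertices, it stalls at some radius r \<le> 1/\<eta>. If a stalled ball misses
  \<epsilon>n/2 vertices of U, the ball (minus a few clash-heavy vertices) becomes the new
  U: it is \<epsilon>n/2 smaller, and each of its vertices loses few out-neighbours,
  because an out-neighbour outside the next ball is blocked by one of O(k + r) colours.
  This happens at most 2/\<epsilon> times. Afterwards every stalled ball covers almost all
  of U, so a vertex b with more than \<epsilon>n/2 + k + 2 in-neighbours in U is entered
  from the stalled ball around a suitable out-neighbour w of any other such vertex a, which
  gives a short rainbow path a, w, ..., b; double counting shows that there are at least
  \<delta> - \<epsilon>n such vertices b. Properness controls all colour repetitions
  except two: edges u \<rightarrow> w \<rightarrow> b of equal colour (rare, as the colours of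
  the edges into w are distinct), and the colour of the last edge into b, which is reserved
  while the ball is grown.\<close>

lemma path_edges_Nil [simp]: "path_edges [] = []"
  by (simp add: path_edges_def)

lemma path_edges_single [simp]: "path_edges [x] = []"
  by (simp add: path_edges_def)

lemma path_edges_Cons_Cons [simp]: "path_edges (x # y # xs) = (x, y) # path_edges (y # xs)"
  by (simp add: path_edges_def)

lemma path_edges_Cons: "xs \<noteq> [] \<Longrightarrow> path_edges (x # xs) = (x, hd xs) # path_edges xs"
  by (cases xs) auto

lemma path_edges_snoc: "xs \<noteq> [] \<Longrightarrow> path_edges (xs @ [y]) = path_edges xs @ [(last xs, y)]"
  by (induction xs rule: induct_list012) auto

lemma length_path_edges [simp]: "length (path_edges xs) = length xs - 1"
  by (simp add: path_edges_def)

lemma increment_small_before_exhaustion: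
  fixes B :: "nat \<Rightarrow> 'a set" and \<eta> :: real
  assumes "finite X" and "\<And>i. B i \<subseteq> X" and "\<And>i. B i \<subseteq> B (Suc i)"
    and "B 0 \<noteq> {}" and "\<eta> > 0"
  shows "\<exists>r. real r \<le> 1 / \<eta> \<and> real (card (B (Suc r) - B r)) < \<eta> * real (card X)"
proof (rule ccontr)
  assume "\<not> ?thesis"
  then have large: "real r \<le> 1 / \<eta> \<Longrightarrow> \<eta> * real (card X) \<le> real (card (B (Suc r) - B r))"
    for r by (meson not_less)
  have finB: "finite (B i)" for i
    using assms(1,2) by (rule finite_subset[rotated])
  define R where "R = nat \<lfloor>1 / \<eta>\<rfloor>"
  have "real r \<le> 1 / \<eta>" if "r \<le> R" for r
    using that \<open>\<eta> > 0\<close> unfolding R_def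
    by (metis of_nat_floor less_eq_real_def of_nat_le_iff order_trans zero_less_divide_1_iff)
  then have "r \<le> Suc R \<Longrightarrow> 1 + real r * (\<eta> * real (card X)) \<le> real (card (B r))" for r
  proof (induction r)
    case 0
    then show ?case using assms(4) finB by (simp add: Suc_le_eq card_gt_0_iff)
  next
    case (Suc r)
    have "card (B (Suc r)) = card (B r) + card (B (Suc r) - B r)"
      using assms(3) finB by (metis card_Diff_subset card_mono le_add_diff_inverse)
    then show ?case using Suc large[of r] by (simp add: algebra_simps)
  qed
  then have "1 + real (Suc R) * (\<eta> * real (card X)) \<le> real (card X)"
    using card_mono[OF assms(1,2)] by (smt (verit) le_refl of_nat_le_iff)
  moreover have "1 / \<eta> < real (Suc R)"
    using \<open>\<eta> > 0\<close> real_of_int_floor_add_one_gt[of "1 / \<eta>"] by (simp add: R_def add.commute)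
  then have "1 < real (Suc R) * \<eta>"
    using \<open>\<eta> > 0\<close> by (simp add: divide_less_eq)
  ultimately show False
    using mult_right_mono[of 1 "real (Suc R) * \<eta>" "real (card X)"] by (simp add: mult.assoc)
qed

lemma card_threshold_mult_le_sum:
  fixes f :: "'a \<Rightarrow> real"
  assumes "finite U" and "\<And>u. u \<in> U \<Longrightarrow> 0 \<le> f u"
  shows "real (card {u\<in>U. t \<le> f u}) * t \<le> (\<Sum>u\<in>U. f u)"
proof -
  have "real (card {u\<in>U. t \<le> f u}) * t = (\<Sum>u\<in>{u\<in>U. t \<le> f u}. t)"
    by simp
  also have "\<dots> \<le> (\<Sum>u\<in>{u\<in>U. t \<le> f u}. f u)"
    by (rule sum_mono) auto
  also have "\<dots> \<le> (\<Sum>u\<in>U. f u)"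
    using assms by (intro sum_mono2) auto
  finally show ?thesis .
qed

lemma inverse_powers_le_k_div_cube:
  fixes \<epsilon> :: real and k :: nat
  assumes "0 < \<epsilon>" "\<epsilon> < 1" "1 \<le> k"
  defines "K \<equiv> real k / \<epsilon> ^ 3"
  shows "1 \<le> 1 / \<epsilon>\<^sup>2" "1 / \<epsilon> \<le> K" "1 / \<epsilon>\<^sup>2 \<le> K" "1 / \<epsilon> ^ 3 \<le> K"
    "real k / \<epsilon> \<le> K" "real k \<le> K"
proof -
  define q where "q = 1 / \<epsilon>"
  have "1 \<le> q"
    using assms by (simp add: q_def)
  have k: "1 \<le> real k"
    using assms by simp
  have q_pow: "1 / \<epsilon> ^ m = q ^ m" for m
    by (simp add: q_def power_one_over)
  have K: "K = real k * q ^ 3"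
    by (simp add: K_def q_pow[symmetric])
  have mono: "q ^ i \<le> q ^ j" if "i \<le> j" for i j
    using that \<open>1 \<le> q\<close> by (rule power_increasing)
  have "q ^ 3 \<le> K"
    unfolding K using k \<open>1 \<le> q\<close> by simp
  moreover have "real k * q ^ 1 \<le> K" "real k * q ^ 0 \<le> K"
    unfolding K using mono[of 1 3] mono[of 0 3] k by (auto intro: mult_left_mono)
  ultimately show "1 \<le> 1 / \<epsilon>\<^sup>2" "1 / \<epsilon> \<le> K" "1 / \<epsilon>\<^sup>2 \<le> K" "1 / \<epsilon> ^ 3 \<le> K"
    "real k / \<epsilon> \<le> K" "real k \<le> K"
    using mono[of 0 2] mono[of 1 3] mono[of 2 3] q_pow[of 1] q_pow[of 2] q_pow[of 3] k
    by (auto simp: q_def)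
qed

lemma card_filter_le_of_inj_on:
  "inj_on f {x\<in>X. f x \<in> C} \<Longrightarrow> finite C \<Longrightarrow> card {x\<in>X. f x \<in> C} \<le> card C"
  by (metis (no_types, lifting) card_image card_mono image_subset_iff mem_Collect_eq)

locale proper_coloured_digraph =
  fixes V :: "'a set" and E :: "('a \<times> 'a) set" and cv :: "'a \<Rightarrow> 'c" and ce :: "'a \<times> 'a \<Rightarrow> 'c"
  assumes digraph: "digraph V E"
    and proper: "proper_total_colouring V E cv ce"
    and rainbow: "rainbow_vertex_set V cv"
begin

lemma finite_V: "finite V"
  using digraph by (simp add: digraph_def)

lemma edges_subset: "E \<subseteq> V \<times> V"
  using digraph by (simp add: digraph_def)

lemma no_loop: "(x, x) \<notin> E"
  using digraph by (simp add: digraph_def)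

lemma inj_on_cv: "inj_on cv V"
  using rainbow by (simp add: rainbow_vertex_set_def)

lemma out_edge_colour_inj: "(x, y) \<in> E \<Longrightarrow> (x, z) \<in> E \<Longrightarrow> ce (x, y) = ce (x, z) \<Longrightarrow> y = z"
  using proper unfolding proper_total_colouring_def by blast

lemma in_edge_colour_inj: "(y, x) \<in> E \<Longrightarrow> (z, x) \<in> E \<Longrightarrow> ce (y, x) = ce (z, x) \<Longrightarrow> y = z"
  using proper unfolding proper_total_colouring_def by blast

lemma edge_colour_neq_source: "(x, y) \<in> E \<Longrightarrow> ce (x, y) \<noteq> cv x"
  using proper unfolding proper_total_colouring_def by blast

lemma edge_colour_neq_target: "(x, y) \<in> E \<Longrightarrow> ce (x, y) \<noteq> cv y"
  using proper unfolding proper_total_colouring_def by blast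

lemma cv_eq_iff: "x \<in> V \<Longrightarrow> y \<in> V \<Longrightarrow> cv x = cv y \<longleftrightarrow> x = y"
  using inj_on_cv by (auto dest: inj_onD)

definition out_nbrs :: "'a \<Rightarrow> 'a set" where
  "out_nbrs u = {w. (u, w) \<in> E}"

definition in_nbrs :: "'a \<Rightarrow> 'a set" where
  "in_nbrs b = {u. (u, b) \<in> E}"

lemma out_nbrs_subset: "out_nbrs u \<subseteq> V"
  using edges_subset by (auto simp: out_nbrs_def)

lemma in_nbrs_subset: "in_nbrs b \<subseteq> V"
  using edges_subset by (auto simp: in_nbrs_def)

lemma finite_subset_V: "U \<subseteq> V \<Longrightarrow> finite U"
  by (rule finite_subset[OF _ finite_V])

definition path_colours :: "'a list \<Rightarrow> 'c set" where
  "path_colours P = cv ` set P \<union> ce ` set (path_edges P)"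

lemma finite_path_colours: "finite (path_colours P)"
  by (simp add: path_colours_def)

lemma card_path_colours_le: "card (path_colours P) \<le> 2 * length P - 1"
proof -
  have "card (path_colours P) \<le> card (cv ` set P) + card (ce ` set (path_edges P))"
    unfolding path_colours_def by (rule card_Un_le)
  also have "\<dots> \<le> length P + length (path_edges P)"
    by (intro add_mono card_image_le[THEN order_trans] card_length) auto
  finally show ?thesis by simp
qed

lemma path_colours_snoc:
  "P \<noteq> [] \<Longrightarrow> path_colours (P @ [w]) = path_colours P \<union> {cv w, ce (last P, w)}"
  by (auto simp: path_colours_def path_edges_snoc)

lemma card_coloured_vertices_le: "finite C \<Longrightarrow> card {w\<in>V. cv w \<in> C} \<le> card C"
  by (rule card_filter_le_of_inj_on) (auto intro: inj_on_subset[OF inj_on_cv])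

lemma card_coloured_out_nbrs_le: "finite C \<Longrightarrow> card {w\<in>out_nbrs u. ce (u, w) \<in> C} \<le> card C"
  by (rule card_filter_le_of_inj_on) (auto simp: out_nbrs_def intro: inj_onI out_edge_colour_inj)

lemma card_coloured_in_nbrs_le: "finite C \<Longrightarrow> card {w\<in>in_nbrs b. ce (w, b) \<in> C} \<le> card C"
  by (rule card_filter_le_of_inj_on) (auto simp: in_nbrs_def intro: inj_onI in_edge_colour_inj)

lemma sum_card_in_nbrs_eq_sum_card_out_nbrs:
  assumes "U \<subseteq> V"
  shows "(\<Sum>b\<in>U. card (in_nbrs b \<inter> U)) = (\<Sum>u\<in>U. card (out_nbrs u \<inter> U))"
proof -
  have "finite U"
    using assms by (rule finite_subset_V)
  have "(SIGMA b:U. in_nbrs b \<inter> U) = prod.swap ` (SIGMA u:U. out_nbrs u \<inter> U)"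
    by (auto simp: in_nbrs_def out_nbrs_def image_iff)
  then have "card (SIGMA b:U. in_nbrs b \<inter> U) = card (SIGMA u:U. out_nbrs u \<inter> U)"
    by (simp add: card_image inj_on_def)
  then show ?thesis
    using \<open>finite U\<close> by simp
qed

lemma card_high_in_degree_ge:
  assumes U: "U \<subseteq> V" "U \<noteq> {}" and out_degree: "\<forall>u\<in>U. D \<le> real (card (out_nbrs u \<inter> U))"
    and "0 \<le> c"
  shows "D - c \<le> real (card {b\<in>U. c \<le> real (card (in_nbrs b \<inter> U))})"
proof -
  let ?A = "{b\<in>U. c \<le> real (card (in_nbrs b \<inter> U))}"
  have "finite U"
    using U(1) by (rule finite_subset_V)
  have "real (card U) * D \<le> (\<Sum>u\<in>U. real (card (out_nbrs u \<inter> U)))"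
    using out_degree sum_mono[of U "\<lambda>_. D"] by simp
  also have "\<dots> = (\<Sum>b\<in>U. real (card (in_nbrs b \<inter> U)))"
    using sum_card_in_nbrs_eq_sum_card_out_nbrs[OF U(1)] by (metis of_nat_sum)
  also have "\<dots> = (\<Sum>b\<in>?A. real (card (in_nbrs b \<inter> U)))
      + (\<Sum>b\<in>U - ?A. real (card (in_nbrs b \<inter> U)))"
    using \<open>finite U\<close> by (subst sum.subset_diff[of ?A]) auto
  also have "\<dots> \<le> (\<Sum>b\<in>?A. real (card U)) + (\<Sum>b\<in>U - ?A. c)"
    using \<open>finite U\<close> by (intro add_mono sum_mono) (auto simp: card_mono)
  also have "\<dots> \<le> real (card ?A) * real (card U) + real (card U) * c"
    using \<open>finite U\<close> \<open>0 \<le> c\<close> by (simp add: card_mono mult_right_mono)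
  finally have "real (card U) * D \<le> real (card U) * (real (card ?A) + c)"
    by (simp add: algebra_simps)
  moreover have "0 < real (card U)"
    using U \<open>finite U\<close> by (simp add: card_gt_0_iff)
  ultimately show ?thesis
    by simp
qed

lemma in_nbr_with_free_colour_exists:
  assumes "U \<subseteq> V" "finite F" "real (card (U - B)) + real (card F) < real (card (in_nbrs b \<inter> U))"
  shows "\<exists>u\<in>B. (u, b) \<in> E \<and> ce (u, b) \<notin> F"
proof (rule ccontr)
  assume "\<not> ?thesis"
  then have "in_nbrs b \<inter> U \<subseteq> (U - B) \<union> {u\<in>in_nbrs b. ce (u, b) \<in> F}"
    by (auto simp: in_nbrs_def)
  then have "card (in_nbrs b \<inter> U) \<le> card ((U - B) \<union> {u\<in>in_nbrs b. ce (u, b) \<in> F})"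
    using assms(1) in_nbrs_subset[of b] by (intro card_mono finite_subset_V) auto
  then have "card (in_nbrs b \<inter> U) \<le> card (U - B) + card {u\<in>in_nbrs b. ce (u, b) \<in> F}"
    using card_Un_le order_trans by blast
  then show False
    using assms(3) card_coloured_in_nbrs_le[OF assms(2), of b] by linarith
qed

section \<open>Rainbow balls\<close>

text \<open>The first vertex is exempt from F, so that the ball of radius 0 around w is {w};
  the last condition reserves the colour of the final edge into the target b.\<close>

definition ball_path :: "'a set \<Rightarrow> 'c set \<Rightarrow> 'a \<Rightarrow> 'a \<Rightarrow> nat \<Rightarrow> 'a list \<Rightarrow> bool" where
  "ball_path U F b w i P \<longleftrightarrow> P \<noteq> [] \<and> hd P = w \<and> distinct P \<and> set P \<subseteq> U
     \<and> set (path_edges P) \<subseteq> E \<and> length P \<le> Suc i \<and> rainbow_path cv ce P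
     \<and> (\<forall>v\<in>set (tl P). cv v \<notin> F) \<and> (\<forall>e\<in>set (path_edges P). ce e \<notin> F)
     \<and> ((last P, b) \<in> E \<longrightarrow> ce (last P, b) \<notin> path_colours P)"

definition rainbow_ball :: "'a set \<Rightarrow> 'c set \<Rightarrow> 'a \<Rightarrow> 'a \<Rightarrow> nat \<Rightarrow> 'a set" where
  "rainbow_ball U F b w i = {v. \<exists>P. ball_path U F b w i P \<and> last P = v}"

definition clash_nbrs :: "'a set \<Rightarrow> 'a \<Rightarrow> 'a \<Rightarrow> 'a set" where
  "clash_nbrs U b u = {w\<in>U. (u, w) \<in> E \<and> (w, b) \<in> E \<and> ce (u, w) = ce (w, b)}"

lemma rainbow_ball_subset: "rainbow_ball U F b w i \<subseteq> U"
  unfolding rainbow_ball_def ball_path_def by (auto dest!: last_in_set)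

lemma rainbow_ball_mono: "i \<le> j \<Longrightarrow> rainbow_ball U F b w i \<subseteq> rainbow_ball U F b w j"
  unfolding rainbow_ball_def ball_path_def by fastforce

lemma centre_in_rainbow_ball: "w \<in> U \<Longrightarrow> w \<in> rainbow_ball U F b w i"
proof -
  assume "w \<in> U"
  then have "ball_path U F b w i [w]"
    by (auto simp: ball_path_def rainbow_path_def path_colours_def dest: edge_colour_neq_source)
  then show ?thesis
    unfolding rainbow_ball_def by force
qed

lemma ball_path_snoc:
  assumes P: "ball_path U F b w i P" and u: "last P = u" and x: "x \<in> U" "(u, x) \<in> E"
    and fresh_vertex: "cv x \<notin> F \<union> path_colours P"
    and fresh_edge: "ce (u, x) \<notin> F \<union> path_colours P"
    and fresh_exit: "(x, b) \<in> E \<Longrightarrow> ce (x, b) \<notin> path_colours P \<and> ce (u, x) \<noteq> ce (x, b)"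
  shows "ball_path U F b w (Suc i) (P @ [x])"
proof -
  have "P \<noteq> []"
    using P by (simp add: ball_path_def)
  then have edges: "path_edges (P @ [x]) = path_edges P @ [(u, x)]"
    using u by (simp add: path_edges_snoc)
  have rainbow: "distinct (map cv P @ map ce (path_edges P))"
    using P by (simp add: ball_path_def rainbow_path_def)
  have "cv x \<noteq> ce (u, x)"
    using edge_colour_neq_target[OF x(2)] by simp
  then have "rainbow_path cv ce (P @ [x])"
    using rainbow fresh_vertex fresh_edge
    unfolding rainbow_path_def edges by (auto simp: path_colours_def)
  moreover have "x \<notin> set P"
    using fresh_vertex by (auto simp: path_colours_def)
  moreover have "(x, b) \<in> E \<longrightarrow> ce (x, b) \<notin> path_colours (P @ [x])"
    using fresh_exit edge_colour_neq_source[of x b] \<open>P \<noteq> []\<close> u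
    by (auto simp: path_colours_snoc)
  ultimately show ?thesis
    using P \<open>P \<noteq> []\<close> x fresh_vertex fresh_edge edges unfolding ball_path_def by auto
qed

text \<open>An out-neighbour of a ball vertex u that does not enter the next ball is blocked by a
  colour of F or of the path to u (on its vertex, on the edge from u, or on its edge to b), or
  it is a clash neighbour of u.\<close>

lemma card_out_nbrs_outside_ball_le:
  assumes U: "U \<subseteq> V" and F: "finite F" and u: "u \<in> rainbow_ball U F b w i"
  shows "card (out_nbrs u \<inter> U - rainbow_ball U F b w (Suc i))
    \<le> 2 * card F + 6 * i + 3 + card (clash_nbrs U b u)"
proof -
  obtain P where P: "ball_path U F b w i P" and last_P: "last P = u"
    using u unfolding rainbow_ball_def by auto
  define C where "C = F \<union> path_colours P"
  have "finite C"
    using F by (simp add: C_def finite_path_colours)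
  have card_P: "card (path_colours P) \<le> 2 * i + 1"
    using card_path_colours_le[of P] P unfolding ball_path_def by linarith
  have card_C: "card C \<le> card F + 2 * i + 1"
    unfolding C_def using card_Un_le[of F "path_colours P"] card_P by linarith
  let ?blocked = "{x\<in>V. cv x \<in> C} \<union> {x\<in>out_nbrs u. ce (u, x) \<in> C}
    \<union> {x\<in>in_nbrs b. ce (x, b) \<in> path_colours P} \<union> clash_nbrs U b u"
  have "out_nbrs u \<inter> U - rainbow_ball U F b w (Suc i) \<subseteq> ?blocked"
  proof (rule subsetI, rule ccontr)
    fix x assume x: "x \<in> out_nbrs u \<inter> U - rainbow_ball U F b w (Suc i)" and "x \<notin> ?blocked"
    then have "ball_path U F b w (Suc i) (P @ [x])"
      using U by (intro ball_path_snoc[OF P last_P])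
        (auto simp: C_def out_nbrs_def in_nbrs_def clash_nbrs_def)
    then have "x \<in> rainbow_ball U F b w (Suc i)"
      unfolding rainbow_ball_def by force
    then show False
      using x by simp
  qed
  then have "card (out_nbrs u \<inter> U - rainbow_ball U F b w (Suc i)) \<le> card ?blocked"
    using U out_nbrs_subset[of u] in_nbrs_subset[of b]
    by (intro card_mono finite_subset_V) (auto simp: clash_nbrs_def)
  also have "\<dots> \<le> card {x\<in>V. cv x \<in> C} + card {x\<in>out_nbrs u. ce (u, x) \<in> C}
      + card {x\<in>in_nbrs b. ce (x, b) \<in> path_colours P} + card (clash_nbrs U b u)"
    by (meson add_mono card_Un_le le_refl order_trans)
  also have "\<dots> \<le> card C + card C + card (path_colours P) + card (clash_nbrs U b u)"
    using card_coloured_vertices_le card_coloured_out_nbrs_le card_coloured_in_nbrs_le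
      \<open>finite C\<close> finite_path_colours by (intro add_mono) auto
  finally show ?thesis
    using card_C card_P by linarith
qed

text \<open>A clash neighbour w of u determines u, as the colours of the edges into w are distinct.\<close>

lemma sum_card_clash_nbrs_le: "U \<subseteq> V \<Longrightarrow> (\<Sum>u\<in>U. card (clash_nbrs U b u)) \<le> card V"
proof -
  assume U: "U \<subseteq> V"
  have "(\<Sum>u\<in>U. card (clash_nbrs U b u)) = card (SIGMA u:U. clash_nbrs U b u)"
    using finite_subset_V[OF U]
    by (subst card_SigmaI) (auto simp: clash_nbrs_def intro: finite_subset)
  also have "\<dots> \<le> card V"
  proof (rule card_inj_on_le[OF _ _ finite_V])
    show "inj_on snd (SIGMA u:U. clash_nbrs U b u)"
      by (rule inj_onI) (auto simp: clash_nbrs_def intro: in_edge_colour_inj)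
    show "snd ` (SIGMA u:U. clash_nbrs U b u) \<subseteq> V"
      using U by (auto simp: clash_nbrs_def)
  qed
  finally show ?thesis .
qed

lemma card_many_clash_nbrs_le:
  "U \<subseteq> V \<Longrightarrow> real (card {u\<in>U. t \<le> real (card (clash_nbrs U b u))}) * t \<le> real (card V)"
  using card_threshold_mult_le_sum[of U "\<lambda>u. real (card (clash_nbrs U b u))" t]
    sum_card_clash_nbrs_le[of U b] finite_subset_V
  by (simp del: of_nat_sum add: of_nat_sum[symmetric])

definition avoiding_rainbow_path :: "'c set \<Rightarrow> real \<Rightarrow> 'a \<Rightarrow> 'a \<Rightarrow> 'a list \<Rightarrow> bool" where
  "avoiding_rainbow_path S d x y xs \<longleftrightarrow> is_path V E xs \<and> hd xs = x \<and> last xs = y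
     \<and> rainbow_path cv ce xs \<and> real (path_length xs) \<le> d
     \<and> (\<forall>e\<in>set (path_edges xs). ce e \<notin> S) \<and> (\<forall>v\<in>set xs. v \<noteq> x \<and> v \<noteq> y \<longrightarrow> cv v \<notin> S)"

lemma kd_connected_iff:
  "kd_connected V E cv ce k d A \<longleftrightarrow>
     (\<forall>S x y. finite S \<and> card S < k \<and> x \<in> A \<and> y \<in> A \<longrightarrow> (\<exists>xs. avoiding_rainbow_path S d x y xs))"
  by (simp add: kd_connected_def avoiding_rainbow_path_def)

lemma avoiding_rainbow_path_single: "x \<in> V \<Longrightarrow> 0 \<le> d \<Longrightarrow> avoiding_rainbow_path S d x x [x]"
  by (simp add: avoiding_rainbow_path_def is_path_def rainbow_path_def path_length_def)

lemma path_colours_disjoint: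
  assumes "ball_path U F b w r P" and "cv w \<notin> F"
  shows "path_colours P \<inter> F = {}"
proof -
  have "P = w # tl P"
    using assms(1) by (cases P) (auto simp: ball_path_def)
  then have "\<forall>v\<in>set P. cv v \<notin> F"
    using assms unfolding ball_path_def by (metis set_ConsD)
  then show ?thesis
    using assms(1) unfolding ball_path_def path_colours_def by blast
qed

text \<open>Forbidding cv a, cv b and ce (a, w) inside P makes the path a, P, b rainbow.\<close>

lemma avoiding_rainbow_path_via_ball:
  assumes U: "U \<subseteq> V" and a: "a \<in> V" and b: "b \<in> V" "a \<noteq> b"
    and w: "(a, w) \<in> E" "w \<noteq> b" "cv w \<notin> S" "ce (a, w) \<notin> S" "ce (a, w) \<noteq> cv b"
    and P: "ball_path U (S \<union> {cv b, cv a, ce (a, w)}) b w r P" and u: "last P = u"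
    and ub: "(u, b) \<in> E" "ce (u, b) \<notin> S \<union> {cv b, cv a, ce (a, w)}"
    and r: "real r + 2 \<le> d"
  shows "avoiding_rainbow_path S d a b (a # P @ [b])"
proof -
  let ?F = "S \<union> {cv b, cv a, ce (a, w)}"
  have P_simps: "P \<noteq> []" "hd P = w" "set P \<subseteq> U" "set (path_edges P) \<subseteq> E" "length P \<le> Suc r"
    and P_rainbow: "distinct (map cv P @ map ce (path_edges P))"
    and P_exit: "ce (u, b) \<notin> path_colours P"
    using P u ub by (auto simp: ball_path_def rainbow_path_def)
  have "w \<in> V" "w \<noteq> a"
    using w edges_subset no_loop by auto
  then have "cv w \<notin> ?F"
    using w a b cv_eq_iff edge_colour_neq_target[OF w(1)] by auto
  then have disjoint: "path_colours P \<inter> ?F = {}"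
    by (rule path_colours_disjoint[OF P])
  have edges: "path_edges (a # P @ [b]) = (a, w) # path_edges P @ [(u, b)]"
    using P_simps u by (simp add: path_edges_Cons path_edges_snoc)
  have "cv a \<noteq> cv b"
    using a b cv_eq_iff by auto
  then have rainbow: "rainbow_path cv ce (a # P @ [b])"
    unfolding rainbow_path_def edges
    using P_rainbow disjoint P_exit ub edge_colour_neq_source[OF w(1)] w(5)
    by (auto simp: path_colours_def)
  then have "distinct (a # P @ [b])"
    unfolding rainbow_path_def distinct_append by (metis distinct_map)
  then have "is_path V E (a # P @ [b])"
    unfolding is_path_def using P_simps U a b edges w(1) ub(1) by auto
  moreover have "real (path_length (a # P @ [b])) \<le> d"
    using P_simps r by (simp add: path_length_def)
  ultimately show ?thesis
    unfolding avoiding_rainbow_path_def edges using rainbow P_simps disjoint w(4) ub(2)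
    by (auto simp: path_colours_def)
qed

end

section \<open>Shrinking to a well-connected core\<close>

locale shrinking_setting = proper_coloured_digraph V E cv ce
  for V :: "'a set" and E and cv :: "'a \<Rightarrow> 'c" and ce +
  fixes \<epsilon> :: real and k :: nat and \<delta> :: real
  assumes eps_pos: "0 < \<epsilon>" and eps_less_1: "\<epsilon> < 1" and k_pos: "1 \<le> k"
    and many_vertices: "1800 * real k / \<epsilon> ^ 4 \<le> real (card V)"
    and large_degree: "\<epsilon> * real (card V) < \<delta>"
begin

definition n :: real where
  "n = real (card V)"

text \<open>In each round U shrinks by \<theta>n, balls stop growing once they gain fewer than \<eta>n
  vertices, a vertex is clash-heavy if it has at least \<tau> clash neighbours, and the minimum
  out-degree inside U drops by at most degree_loss.\<close>

definition \<theta> :: real where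
  "\<theta> = \<epsilon> / 2"

definition \<eta> :: real where
  "\<eta> = \<epsilon>\<^sup>2 / 20"

definition \<tau> :: real where
  "\<tau> = \<epsilon>\<^sup>2 * n / 20"

definition degree_loss :: real where
  "degree_loss = \<eta> * n + \<tau> + n / \<tau> + 2 * (real k + 2) + 6 / \<eta> + 3"

lemma eps_n_ge: "1800 * (real k / \<epsilon> ^ 3) \<le> \<epsilon> * n"
proof -
  have "1800 * (real k / \<epsilon> ^ 3) = \<epsilon> * (1800 * real k / \<epsilon> ^ 4)"
    using eps_pos by (simp add: field_simps power_numeral_reduce)
  also have "\<dots> \<le> \<epsilon> * n"
    using eps_pos many_vertices by (intro mult_left_mono) (auto simp: n_def)
  finally show ?thesis .
qed

lemmas eps_bounds = inverse_powers_le_k_div_cube[OF eps_pos eps_less_1 k_pos]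

lemma n_pos: "0 < n"
proof -
  have "1 \<le> real k"
    using k_pos by simp
  then have "0 < \<epsilon> * n"
    using eps_n_ge eps_bounds(6) by linarith
  then show ?thesis
    using eps_pos by (simp add: zero_less_mult_iff)
qed

lemma \<theta>_pos: "0 < \<theta>" and \<eta>_pos: "0 < \<eta>" and \<tau>_pos: "0 < \<tau>"
  using eps_pos n_pos by (simp_all add: \<theta>_def \<eta>_def \<tau>_def)

lemma n_div_\<tau>: "n / \<tau> = 20 / \<epsilon>\<^sup>2"
  using eps_pos n_pos by (simp add: \<tau>_def)

lemma degree_loss_eq: "degree_loss = \<epsilon>\<^sup>2 * n / 10 + 140 / \<epsilon>\<^sup>2 + 2 * real k + 7"
  using eps_pos n_pos by (simp add: degree_loss_def \<eta>_def \<tau>_def field_simps)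

lemma degree_loss_nonneg: "0 \<le> degree_loss"
  using n_pos by (simp add: degree_loss_eq)

lemma rounds_degree_loss_le:
  assumes "real j * \<theta> * n \<le> n"
  shows "real j * degree_loss + \<theta> * n + real k + 3 \<le> \<epsilon> * n"
proof -
  have "real j \<le> 2 / \<epsilon>"
    using assms n_pos eps_pos by (simp add: \<theta>_def field_simps)
  then have "real j * degree_loss \<le> 2 / \<epsilon> * degree_loss"
    using degree_loss_nonneg by (rule mult_right_mono)
  also have "\<dots> = \<epsilon> * n / 5 + 280 * (1 / \<epsilon> ^ 3) + 4 * (real k / \<epsilon>) + 14 * (1 / \<epsilon>)"
    using eps_pos by (simp add: degree_loss_eq field_simps power_numeral_reduce)
  finally show ?thesis
    using eps_n_ge eps_bounds by (simp add: \<theta>_def)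
qed

lemma clash_heavy_bound_less: "n / \<tau> + 2 * real k < \<theta> * n + real k + 3"
  using eps_n_ge eps_bounds by (simp add: n_div_\<tau> \<theta>_def)

lemma radius_bound: "1 / \<eta> + 2 \<le> 1280 / \<epsilon>\<^sup>2"
  using eps_bounds(1) by (simp add: \<eta>_def)

definition clash_heavy :: "'a set \<Rightarrow> 'a \<Rightarrow> 'a set" where
  "clash_heavy U b = {u\<in>U. \<tau> \<le> real (card (clash_nbrs U b u))}"

lemma card_clash_heavy_le: "U \<subseteq> V \<Longrightarrow> real (card (clash_heavy U b)) \<le> n / \<tau>"
  using card_many_clash_nbrs_le[of U \<tau> b] \<tau>_pos
  by (simp add: clash_heavy_def n_def field_simps)

definition stalled_balls_cover :: "'a set \<Rightarrow> bool" where
  "stalled_balls_cover U \<longleftrightarrow> (\<forall>w\<in>U. \<forall>b\<in>V. \<forall>F r. finite F \<and> card F \<le> k + 2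
     \<and> w \<notin> clash_heavy U b \<and> real r \<le> 1 / \<eta>
     \<and> real (card (rainbow_ball U F b w (Suc r) - rainbow_ball U F b w r)) < \<eta> * n
     \<longrightarrow> real (card (U - rainbow_ball U F b w r)) < \<theta> * n)"

text \<open>The invariant after j rounds of shrinking.\<close>

definition core :: "'a set \<Rightarrow> nat \<Rightarrow> bool" where
  "core U j \<longleftrightarrow> U \<subseteq> V \<and> U \<noteq> {}
     \<and> (\<forall>u\<in>U. \<delta> - real j * degree_loss \<le> real (card (out_nbrs u \<inter> U)))
     \<and> real (card U) + real j * \<theta> * n \<le> n"

lemma rainbow_ball_stalls:
  assumes "U \<subseteq> V" "w \<in> U"
  shows "\<exists>r. real r \<le> 1 / \<eta>
    \<and> real (card (rainbow_ball U F b w (Suc r) - rainbow_ball U F b w r)) < \<eta> * n"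
proof -
  have "rainbow_ball U F b w i \<subseteq> rainbow_ball U F b w (Suc i)" for i
    by (rule rainbow_ball_mono) simp
  moreover have "rainbow_ball U F b w 0 \<noteq> {}"
    using centre_in_rainbow_ball[OF assms(2)] by blast
  ultimately obtain r where "real r \<le> 1 / \<eta>"
    and "real (card (rainbow_ball U F b w (Suc r) - rainbow_ball U F b w r)) < \<eta> * real (card U)"
    using increment_small_before_exhaustion[of U "rainbow_ball U F b w" \<eta>,
        OF finite_subset_V[OF assms(1)] rainbow_ball_subset]
      \<eta>_pos by blast
  moreover have "\<eta> * real (card U) \<le> \<eta> * n"
    using assms(1) \<eta>_pos finite_V by (simp add: n_def card_mono)
  ultimately show ?thesis
    by force
qed

lemma first_edge_exists:
  assumes U: "U \<subseteq> V" and a: "a \<in> U" and b: "b \<in> V" and S: "finite S" "card S < k"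
    and out_degree: "n / \<tau> + 2 * real k < real (card (out_nbrs a \<inter> U))"
  shows "\<exists>w\<in>U. (a, w) \<in> E \<and> w \<notin> clash_heavy U b \<and> w \<noteq> b
    \<and> cv w \<notin> S \<and> ce (a, w) \<notin> S \<and> ce (a, w) \<noteq> cv b"
proof (rule ccontr)
  let ?blocked = "clash_heavy U b \<union> {w\<in>V. cv w \<in> S}
    \<union> {w\<in>out_nbrs a. ce (a, w) \<in> insert (cv b) S} \<union> {b}"
  assume "\<not> ?thesis"
  then have "out_nbrs a \<inter> U \<subseteq> ?blocked"
    using U by (auto simp: out_nbrs_def)
  then have "card (out_nbrs a \<inter> U) \<le> card ?blocked"
    using U b out_nbrs_subset[of a]
    by (intro card_mono finite_subset_V) (auto simp: clash_heavy_def)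
  also have "\<dots> \<le> card (clash_heavy U b) + card {w\<in>V. cv w \<in> S}
      + card {w\<in>out_nbrs a. ce (a, w) \<in> insert (cv b) S} + card {b}"
    by (meson add_mono card_Un_le le_refl order_trans)
  also have "\<dots> \<le> card (clash_heavy U b) + card S + (card S + 1) + 1"
    using card_coloured_vertices_le[OF S(1)] card_coloured_out_nbrs_le[of "insert (cv b) S" a] S(1)
    by (intro add_mono) (auto simp: card_insert_if split: if_splits)
  finally show False
    using card_clash_heavy_le[OF U, of b] out_degree S(2) by linarith
qed

lemma core_out_degree_large:
  assumes "core U j" "a \<in> U"
  shows "n / \<tau> + 2 * real k < real (card (out_nbrs a \<inter> U))"
proof -
  have "real j * \<theta> * n \<le> n"
    using assms(1) unfolding core_def by linarith
  then show ?thesis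
    using assms rounds_degree_loss_le[of j] clash_heavy_bound_less large_degree
    unfolding core_def n_def by fastforce
qed

lemma avoiding_rainbow_path_in_core:
  assumes core: "core U j" and cover: "stalled_balls_cover U"
    and a: "a \<in> U" and b: "b \<in> U" "a \<noteq> b" "\<theta> * n + real k + 3 \<le> real (card (in_nbrs b \<inter> U))"
    and S: "finite S" "card S < k"
  shows "\<exists>xs. avoiding_rainbow_path S (1280 / \<epsilon>\<^sup>2) a b xs"
proof -
  have U: "U \<subseteq> V"
    using core by (simp add: core_def)
  obtain w where w: "w \<in> U" "(a, w) \<in> E" "w \<notin> clash_heavy U b" "w \<noteq> b"
    "cv w \<notin> S" "ce (a, w) \<notin> S" "ce (a, w) \<noteq> cv b"
    using first_edge_exists[OF U a _ S core_out_degree_large[OF core a]] b U by blast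
  define F where "F = S \<union> {cv b, cv a, ce (a, w)}"
  have "finite F"
    using S by (simp add: F_def)
  have "card {cv b, cv a, ce (a, w)} \<le> 3"
    by (simp add: card_insert_le_m1)
  then have card_F: "card F \<le> k + 2"
    using card_Un_le[of S "{cv b, cv a, ce (a, w)}"] S(2) unfolding F_def by linarith
  obtain r where r: "real r \<le> 1 / \<eta>"
    and stalled: "real (card (rainbow_ball U F b w (Suc r) - rainbow_ball U F b w r)) < \<eta> * n"
    using rainbow_ball_stalls[OF U w(1)] by blast
  have "real (card (U - rainbow_ball U F b w r)) < \<theta> * n"
    using cover w(1,3) b(1) U \<open>finite F\<close> card_F r stalled
    unfolding stalled_balls_cover_def by blast
  then have "real (card (U - rainbow_ball U F b w r)) + real (card F) < real (card (in_nbrs b \<inter> U))"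
    using b(3) card_F by linarith
  then obtain u where u: "u \<in> rainbow_ball U F b w r" "(u, b) \<in> E" "ce (u, b) \<notin> F"
    using in_nbr_with_free_colour_exists[OF U \<open>finite F\<close>] by blast
  then obtain P where P: "ball_path U F b w r P" "last P = u"
    unfolding rainbow_ball_def by blast
  have "real r + 2 \<le> 1280 / \<epsilon>\<^sup>2"
    using r radius_bound by linarith
  then have "avoiding_rainbow_path S (1280 / \<epsilon>\<^sup>2) a b (a # P @ [b])"
    using avoiding_rainbow_path_via_ball[OF U _ _ b(2) w(2,4,5,6,7) P[unfolded F_def] u(2)
        u(3)[unfolded F_def]] a b(1) U by blast
  then show ?thesis
    by blast
qed

lemma kd_connected_high_in_degree:
  assumes "core U j" "stalled_balls_cover U"
  shows "kd_connected V E cv ce k (1280 / \<epsilon>\<^sup>2)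
    {b\<in>U. \<theta> * n + real k + 3 \<le> real (card (in_nbrs b \<inter> U))}"
  unfolding kd_connected_iff
proof (intro allI impI)
  fix S :: "'c set" and x y
  let ?A = "{b\<in>U. \<theta> * n + real k + 3 \<le> real (card (in_nbrs b \<inter> U))}"
  assume "finite S \<and> card S < k \<and> x \<in> ?A \<and> y \<in> ?A"
  then have S: "finite S" "card S < k" and x: "x \<in> U" and y: "y \<in> ?A"
    by auto
  show "\<exists>xs. avoiding_rainbow_path S (1280 / \<epsilon>\<^sup>2) x y xs"
  proof (cases "x = y")
    case True
    have "x \<in> V"
      using assms(1) x by (auto simp: core_def)
    then show ?thesis
      using True avoiding_rainbow_path_single[of x "1280 / \<epsilon>\<^sup>2" S] by auto
  next
    case False
    then show ?thesis
      using avoiding_rainbow_path_in_core[OF assms x _ False _ S] y by blast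
  qed
qed

lemma connected_set_of_covering_core:
  assumes "core U j" "stalled_balls_cover U"
  shows "\<exists>A\<subseteq>V. kd_connected V E cv ce k (1280 / \<epsilon>\<^sup>2) A \<and> \<delta> - \<epsilon> * n \<le> real (card A)"
proof -
  let ?A = "{b\<in>U. \<theta> * n + real k + 3 \<le> real (card (in_nbrs b \<inter> U))}"
  have U: "U \<subseteq> V" "U \<noteq> {}" "\<forall>u\<in>U. \<delta> - real j * degree_loss \<le> real (card (out_nbrs u \<inter> U))"
    and "real j * \<theta> * n \<le> n"
    using assms(1) unfolding core_def by auto
  then have "\<delta> - \<epsilon> * n \<le> \<delta> - real j * degree_loss - (\<theta> * n + real k + 3)"
    using rounds_degree_loss_le[of j] by linarith
  also have "\<dots> \<le> real (card ?A)"
    using \<theta>_pos n_pos by (intro card_high_in_degree_ge[OF U]) simp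
  finally have "\<delta> - \<epsilon> * n \<le> real (card ?A)" .
  moreover have "?A \<subseteq> V"
    using U(1) by blast
  ultimately show ?thesis
    using kd_connected_high_in_degree[OF assms] by blast
qed

lemma out_degree_loss_in_stalled_ball:
  assumes U: "U \<subseteq> V" and F: "finite F" "card F \<le> k + 2" and r: "real r \<le> 1 / \<eta>"
    and stalled: "real (card (rainbow_ball U F b w (Suc r) - rainbow_ball U F b w r)) < \<eta> * n"
    and u: "u \<in> rainbow_ball U F b w r" "u \<notin> clash_heavy U b"
  shows "real (card (out_nbrs u \<inter> U))
    \<le> real (card (out_nbrs u \<inter> (rainbow_ball U F b w r - clash_heavy U b))) + degree_loss"
proof -
  let ?B = "rainbow_ball U F b w r" and ?B' = "rainbow_ball U F b w (Suc r)"
  let ?escaping = "out_nbrs u \<inter> U - ?B'"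
  have "out_nbrs u \<inter> U \<subseteq> (out_nbrs u \<inter> (?B - clash_heavy U b)) \<union> ?escaping \<union> (?B' - ?B)
      \<union> clash_heavy U b"
    by blast
  then have "card (out_nbrs u \<inter> U) \<le> card ((out_nbrs u \<inter> (?B - clash_heavy U b)) \<union> ?escaping
      \<union> (?B' - ?B) \<union> clash_heavy U b)"
    using U rainbow_ball_subset[of U F b w]
    by (intro card_mono finite_subset_V) (auto simp: clash_heavy_def)
  also have "\<dots> \<le> card (out_nbrs u \<inter> (?B - clash_heavy U b)) + card ?escaping + card (?B' - ?B)
      + card (clash_heavy U b)"
    by (meson add_mono card_Un_le le_refl order_trans)
  finally have "real (card (out_nbrs u \<inter> U)) \<le> real (card (out_nbrs u \<inter> (?B - clash_heavy U b)))
      + real (card ?escaping) + real (card (?B' - ?B)) + real (card (clash_heavy U b))"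
    by linarith
  moreover have "real (card ?escaping)
      \<le> 2 * real (card F) + 6 * real r + 3 + real (card (clash_nbrs U b u))"
    using card_out_nbrs_outside_ball_le[OF U F(1) u(1)] by linarith
  moreover have "real (card (clash_nbrs U b u)) < \<tau>"
    using u rainbow_ball_subset by (force simp: clash_heavy_def)
  moreover have "6 * real r \<le> 6 / \<eta>" and "real (card F) \<le> real k + 2"
    using r F(2) by simp_all
  ultimately show ?thesis
    using stalled card_clash_heavy_le[OF U, of b] unfolding degree_loss_def by argo
qed

text \<open>If some stalled ball misses \<theta>n vertices of U, the ball without its clash-heavy
  vertices is the next core.\<close>

lemma core_shrinks:
  assumes core: "core U j" and not_cover: "\<not> stalled_balls_cover U"
  shows "\<exists>U'. core U' (Suc j) \<and> card U' < card U"
proof -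
  have U: "U \<subseteq> V" "\<forall>u\<in>U. \<delta> - real j * degree_loss \<le> real (card (out_nbrs u \<inter> U))"
    "real (card U) + real j * \<theta> * n \<le> n"
    using core unfolding core_def by auto
  obtain w b F r where w: "w \<in> U" "w \<notin> clash_heavy U b" and F: "finite F" "card F \<le> k + 2"
    and r: "real r \<le> 1 / \<eta>"
    and stalled: "real (card (rainbow_ball U F b w (Suc r) - rainbow_ball U F b w r)) < \<eta> * n"
    and missed: "\<theta> * n \<le> real (card (U - rainbow_ball U F b w r))"
    using not_cover unfolding stalled_balls_cover_def by (auto simp: not_less)
  define B where "B = rainbow_ball U F b w r"
  define U' where "U' = B - clash_heavy U b"
  have "B \<subseteq> U"
    unfolding B_def by (rule rainbow_ball_subset)
  then have card_U: "card U = card B + card (U - B)"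
    using finite_subset_V[OF U(1)]
    by (metis card_Diff_subset finite_subset card_mono le_add_diff_inverse)
  have "card U' \<le> card B"
    unfolding U'_def using \<open>B \<subseteq> U\<close> finite_subset_V[OF U(1)]
    by (intro card_mono) (auto intro: finite_subset)
  moreover have "0 < card (U - B)"
    using missed \<theta>_pos n_pos unfolding B_def by (smt (verit) mult_pos_pos of_nat_0_less_iff)
  ultimately have "card U' < card U"
    using card_U by linarith
  moreover have "real (card U') + real (Suc j) * \<theta> * n \<le> n"
    using \<open>card U' \<le> card B\<close> card_U missed U(3) unfolding B_def by (simp add: algebra_simps)
  moreover have "w \<in> U'"
    using centre_in_rainbow_ball[OF w(1)] w(2) unfolding U'_def B_def by blast
  moreover have "\<delta> - real (Suc j) * degree_loss \<le> real (card (out_nbrs u \<inter> U'))" if "u \<in> U'" for u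
    using out_degree_loss_in_stalled_ball[OF U(1) F r stalled, of u] U(2) \<open>B \<subseteq> U\<close> that
    unfolding U'_def B_def by (force simp: algebra_simps)
  moreover have "U' \<subseteq> V"
    using \<open>B \<subseteq> U\<close> U(1) unfolding U'_def by blast
  ultimately show ?thesis
    unfolding core_def by blast
qed

lemma core_all_vertices:
  assumes "V \<noteq> {}" and "\<And>u. u \<in> V \<Longrightarrow> \<delta> \<le> real (card (out_nbrs u))"
  shows "core V 0"
  using assms out_nbrs_subset by (simp add: core_def n_def Int_absorb2)

lemma connected_set_of_core:
  "core U j \<Longrightarrow> \<exists>A\<subseteq>V. kd_connected V E cv ce k (1280 / \<epsilon>\<^sup>2) A \<and> \<delta> - \<epsilon> * n \<le> real (card A)"
proof (induction "card U" arbitrary: U j rule: less_induct)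
  case less
  show ?case
  proof (cases "stalled_balls_cover U")
    case True
    then show ?thesis
      using connected_set_of_covering_core[OF less.prems] by blast
  next
    case False
    then obtain U' where "core U' (Suc j)" "card U' < card U"
      using core_shrinks[OF less.prems] by blast
    then show ?thesis
      using less.hyps by blast
  qed
qed

end

lemma min_outdeg_le_out_degree:
  "digraph V E \<Longrightarrow> u \<in> V \<Longrightarrow> min_outdeg V E \<le> card {y. (u, y) \<in> E}"
  by (auto simp: min_outdeg_def digraph_def intro: Min_le)

lemma min_outdeg_le_card: "digraph V E \<Longrightarrow> min_outdeg V E \<le> card V"
proof (cases "V = {}")
  case False
  assume digraph: "digraph V E"
  then obtain u where "u \<in> V" "{y. (u, y) \<in> E} \<subseteq> V"
    using False by (auto simp: digraph_def)
  then show ?thesis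
    using min_outdeg_le_out_degree[OF digraph] digraph
    by (meson card_mono digraph_def order_trans)
qed (simp add: min_outdeg_def)

lemma large_min_outdeg_bounds:
  assumes "digraph V E" and "0 < \<epsilon>" and "\<epsilon> * real (card V) < real (min_outdeg V E)"
  shows "V \<noteq> {}" and "\<epsilon> < 1"
proof -
  show "V \<noteq> {}"
    using assms(3) by (auto simp: min_outdeg_def)
  have "\<epsilon> * real (card V) < real (card V)"
    using assms(3) min_outdeg_le_card[OF assms(1)] by linarith
  then show "\<epsilon> < 1"
    using mult_right_mono[of 1 \<epsilon> "real (card V)"] by (cases "\<epsilon> < 1") auto
qed

theorem mainTheorem7:
  fixes \<epsilon> :: real and k :: nat
    and V :: "'a set" and E :: "('a \<times> 'a) set"
    and cv :: "'a \<Rightarrow> 'c" and ce :: "'a \<times> 'a \<Rightarrow> 'c"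
  assumes "\<epsilon> > 0"
    and "digraph V E"
    and "proper_total_colouring V E cv ce"
    and "rainbow_vertex_set V cv"
    and "real (card V) \<ge> 1800 * real k / \<epsilon> ^ 4"
  shows "\<exists>A \<subseteq> V. kd_connected V E cv ce k (1280 / \<epsilon> ^ 2) A \<and>
           real (card A) \<ge> real (min_outdeg V E) - \<epsilon> * real (card V)"
proof -
  let ?\<delta> = "real (min_outdeg V E)"
  consider (small) "?\<delta> \<le> \<epsilon> * real (card V)" | (k_0) "k = 0"
    | (large) "1 \<le> k" "\<epsilon> * real (card V) < ?\<delta>"
    by linarith
  then show ?thesis
  proof cases
    case small
    then show ?thesis
      by (intro exI[of _ "{}"]) (simp add: kd_connected_def)
  next
    case k_0
    have "?\<delta> - \<epsilon> * real (card V) \<le> real (card V)"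
      using min_outdeg_le_card[OF assms(2)] assms(1) zero_le_mult_iff[of \<epsilon> "real (card V)"]
      by linarith
    then show ?thesis
      using k_0 by (intro exI[of _ V]) (simp add: kd_connected_def)
  next
    case large
    note bounds = large_min_outdeg_bounds[OF assms(2,1) large(2)]
    interpret shrinking_setting V E cv ce \<epsilon> k ?\<delta>
      using assms bounds large by unfold_locales auto
    have "core V 0"
      using bounds min_outdeg_le_out_degree[OF assms(2)]
      by (intro core_all_vertices) (simp_all add: out_nbrs_def)
    then show ?thesis
      using connected_set_of_core unfolding n_def by blast
  qed
qed

end
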